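(* Let $\Omega$ be a non-empty list of atoms and let $A,B$ be formulas with frontier $\Omega$. Whenever the joins in question exist, $A\vee_\Omega B=\varphi(\psi(A)\sqcup_\Omega\psi(B))$ and $\bot_\Omega=\varphi(0_\Omega)$, where $\vee_\Omega$ and $\bot_\Omega$ denote binary join and least element in $\mathrm{Frm}_\Omega$, and $\sqcup_\Omega$ and $0_\Omega$ denote binary join and least element in $\mathrm{Ctx}_\Omega$.
   Context: Formulas are built from atoms ($p,q,\dots$) by a binary product: every formula is an atom or $A\bullet B$. A context is a finite (possibly empty) list of formulas; commas denote concatenation. The frontier $\mathrm{fr}$ is the ordered list of atom occurrences ($\mathrm{fr}(p)=p$, $\mathrm{fr}(A\bullet B)=\mathrm{fr}(A),\mathrm{fr}(B)$; for contexts, concatenate). The sequent calculus has exactly four rules (no weakening, contraction or exchange): ($\bullet L$) from $A,B,\Delta\vdash C$ infer $A\bullet B,\Delta\vdash C$ (the product must be leftmost); ($\bullet R$) from $\Gamma\vdash A$ and $\Delta\vdash B$ infer $\Gamma,\Delta\vdash A\bullet B$; ($id$) $A\vdash A$; ($cut$) from $\Theta\vdash A$ and $\Gamma,A,\Delta\vdash B$ infer $\Gamma,\Theta,\Delta\vdash B$; derivable means conclusion of a finite derivation tree with no undischarged premises. The Tamari order on formulas is the least preorder with $(A\bullet B)\bullet C\le A\bullet(B\bullet C)$ and $A_1\le A_2$, $B_1\le B_2$ implying $A_1\bullet B_1\le A_2\bullet B_2$. The substitution order on contexts is the least relation $\le$ such that (1) $\Gamma\vdash A$ derivable implies $\Gamma\le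 A$ (one-element context); (2) $\cdot\le\cdot$; (3) $\Gamma_1\le\Gamma_2$ and $\Theta_1\le\Theta_2$ imply $(\Gamma_1,\Theta_1)\le(\Gamma_2,\Theta_2)$. $\mathrm{Frm}_\Omega$ is the poset of formulas with frontier $\Omega$ under the Tamari order; $\mathrm{Ctx}_\Omega$ is the poset of contexts with frontier $\Omega$ under the substitution order. $\varphi(A)=A$, $\varphi(\Gamma,A)=\varphi(\Gamma)\bullet A$ (left-associated product of a non-empty context); $\psi(p)=p$, $\psi(A\bullet B)=\psi(A),B$. *)

theory Defs
  imports Main
begin

datatype 'a frm = Atom 'a | Prod "'a frm" "'a frm"

type_synonym 'a ctx = "'a frm list"

fun fr :: "'a frm \<Rightarrow> 'a list" where
  "fr (Atom p) = [p]"
| "fr (Prod A B) = fr A @ fr B"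

definition frc :: "'a ctx \<Rightarrow> 'a list" where
  "frc G = concat (map fr G)"

inductive deriv :: "'a ctx \<Rightarrow> 'a frm \<Rightarrow> bool" where
  ProdL: "deriv (A # B # D) C \<Longrightarrow> deriv (Prod A B # D) C"
| ProdR: "deriv G A \<Longrightarrow> deriv D B \<Longrightarrow> deriv (G @ D) (Prod A B)"
| Id: "deriv [A] A"
| Cut: "deriv T A \<Longrightarrow> deriv (G @ A # D) B \<Longrightarrow> deriv (G @ T @ D) B"

inductive tam_le :: "'a frm \<Rightarrow> 'a frm \<Rightarrow> bool" where
  refl: "tam_le A A"
| trans: "tam_le A B \<Longrightarrow> tam_le B C \<Longrightarrow> tam_le A C"
| assoc: "tam_le (Prod (Prod A B) C) (Prod A (Prod B C))"
| mono: "tam_le A1 A2 \<Longrightarrow> tam_le B1 B2 \<Longrightarrow> tam_le (Prod A1 B1) (Prod A2 B2)"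

inductive sub_le :: "'a ctx \<Rightarrow> 'a ctx \<Rightarrow> bool" where
  single: "deriv G A \<Longrightarrow> sub_le G [A]"
| empty: "sub_le [] []"
| concat: "sub_le G1 G2 \<Longrightarrow> sub_le T1 T2 \<Longrightarrow> sub_le (G1 @ T1) (G2 @ T2)"

text \<open>Left-associated product of a non-empty context (undefined on the empty context).\<close>
fun phi :: "'a ctx \<Rightarrow> 'a frm" where
  "phi (A # G) = foldl Prod A G"

fun psi :: "'a frm \<Rightarrow> 'a ctx" where
  "psi (Atom p) = [Atom p]"
| "psi (Prod A B) = psi A @ [B]"

definition Frm :: "'a list \<Rightarrow> 'a frm set" where
  "Frm \<Omega> = {A. fr A = \<Omega>}"

definition Ctx :: "'a list \<Rightarrow> 'a ctx set" where
  "Ctx \<Omega> = {G. frc G = \<Omega>}"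

definition is_join :: "('b \<Rightarrow> 'b \<Rightarrow> bool) \<Rightarrow> 'b set \<Rightarrow> 'b \<Rightarrow> 'b \<Rightarrow> 'b \<Rightarrow> bool" where
  "is_join le S x y z \<longleftrightarrow> z \<in> S \<and> le x z \<and> le y z \<and>
     (\<forall>w\<in>S. le x w \<and> le y w \<longrightarrow> le z w)"

definition is_least :: "('b \<Rightarrow> 'b \<Rightarrow> bool) \<Rightarrow> 'b set \<Rightarrow> 'b \<Rightarrow> bool" where
  "is_least le S z \<longleftrightarrow> z \<in> S \<and> (\<forall>w\<in>S. le z w)"

end

theory Submission
  imports Defs
begin

(* psi maps Frm_Omega into Ctx_Omega and phi maps it back, with phi (psi A) = A. Both maps are
   monotone: the sequent calculus is sound and complete for the Tamari order when a context is read
   as its left-associated product, so the substitution order on contexts is carried by phi into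
   the Tamari order and conversely. Since the Tamari order is antisymmetric, phi sends any join or
   least element of Ctx_Omega to the corresponding one of Frm_Omega. *)

lemma is_join_retraction:
  assumes antisym: "\<And>x y. x \<in> S \<Longrightarrow> y \<in> S \<Longrightarrow> le x y \<Longrightarrow> le y x \<Longrightarrow> x = y"
    and f_into: "\<And>x. x \<in> S \<Longrightarrow> f x \<in> T" and g_into: "\<And>y. y \<in> T \<Longrightarrow> g y \<in> S"
    and f_mono: "\<And>x y. le x y \<Longrightarrow> le' (f x) (f y)"
    and g_mono: "\<And>y z. y \<in> T \<Longrightarrow> le' y z \<Longrightarrow> le (g y) (g z)"
    and retract: "\<And>x. x \<in> S \<Longrightarrow> g (f x) = x"
    and "a \<in> S" "b \<in> S" and x: "is_join le S a b x" and j: "is_join le' T (f a) (f b) j"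
  shows "x = g j"
proof -
  have x_in: "x \<in> S" and "le a x" "le b x" using x by (auto simp: is_join_def)
  have j_in: "j \<in> T" and "le' (f a) j" "le' (f b) j"
    and j_least: "\<And>w. w \<in> T \<Longrightarrow> le' (f a) w \<Longrightarrow> le' (f b) w \<Longrightarrow> le' j w"
    using j by (auto simp: is_join_def)
  have "le' j (f x)" using j_least f_into f_mono x_in \<open>le a x\<close> \<open>le b x\<close> by blast
  then have "le (g j) x" using g_mono j_in retract x_in by metis
  have "le a (g j)" "le b (g j)"
    using g_mono f_into retract \<open>a \<in> S\<close> \<open>b \<in> S\<close> \<open>le' (f a) j\<close> \<open>le' (f b) j\<close> by metis+
  then have "le x (g j)" using x g_into j_in by (simp add: is_join_def)
  with \<open>le (g j) x\<close> show ?thesis using antisym x_in g_into j_in by blast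
qed

lemma is_least_retraction:
  assumes antisym: "\<And>x y. x \<in> S \<Longrightarrow> y \<in> S \<Longrightarrow> le x y \<Longrightarrow> le y x \<Longrightarrow> x = y"
    and f_into: "\<And>x. x \<in> S \<Longrightarrow> f x \<in> T" and g_into: "\<And>y. y \<in> T \<Longrightarrow> g y \<in> S"
    and g_mono: "\<And>y z. y \<in> T \<Longrightarrow> le' y z \<Longrightarrow> le (g y) (g z)"
    and retract: "\<And>x. x \<in> S \<Longrightarrow> g (f x) = x"
    and x: "is_least le S x" and z: "is_least le' T z"
  shows "x = g z"
proof (rule antisym)
  show "x \<in> S" "g z \<in> S" using x z g_into by (auto simp: is_least_def)
  show "le x (g z)" using x \<open>g z \<in> S\<close> by (simp add: is_least_def)
  show "le (g z) x" using g_mono[of z "f x"] x z f_into retract by (simp add: is_least_def)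
qed

lemma fr_not_Nil: "fr A \<noteq> []"
  by (induction A) auto

lemma frc_eq_Nil_iff: "frc G = [] \<longleftrightarrow> G = []"
  by (cases G) (auto simp: frc_def fr_not_Nil)

lemma deriv_frc: "deriv G A \<Longrightarrow> frc G = fr A"
  by (induction rule: deriv.induct) (auto simp: frc_def)

lemma deriv_ctx_not_Nil: "deriv G A \<Longrightarrow> G \<noteq> []"
  using deriv_frc frc_eq_Nil_iff fr_not_Nil by metis

lemma psi_not_Nil: "psi A \<noteq> []"
  by (induction A) auto

lemma phi_append: "G \<noteq> [] \<Longrightarrow> phi (G @ T) = foldl Prod (phi G) T"
  by (cases G) auto

lemma phi_psi: "phi (psi A) = A"
  by (induction A) (auto simp: phi_append psi_not_Nil)

lemma frc_psi: "frc (psi A) = fr A"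
  by (induction A) (auto simp: frc_def)

lemma fr_foldl_Prod: "fr (foldl Prod C G) = fr C @ frc G"
  by (induction G arbitrary: C) (auto simp: frc_def)

lemma fr_phi: "G \<noteq> [] \<Longrightarrow> fr (phi G) = frc G"
  by (cases G) (auto simp: fr_foldl_Prod frc_def)

lemmas tam_le_trans[trans] = tam_le.trans

lemma tam_le_foldl_Prod_start: "tam_le C C' \<Longrightarrow> tam_le (foldl Prod C T) (foldl Prod C' T)"
  by (induction T arbitrary: C C') (auto intro: tam_le.mono tam_le.refl)

lemma tam_le_foldl_Prod_assoc: "D \<noteq> [] \<Longrightarrow> tam_le (foldl Prod C D) (Prod C (phi D))"
proof (induction D rule: rev_induct)
  case Nil
  then show ?case by simp
next
  case (snoc d D)
  show ?case
  proof (cases "D = []")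
    case True
    then show ?thesis by (simp add: tam_le.refl)
  next
    case False
    have "tam_le (foldl Prod C (D @ [d])) (Prod (Prod C (phi D)) d)"
      using snoc False by (auto intro: tam_le.mono tam_le.refl)
    also have "tam_le \<dots> (Prod C (Prod (phi D) d))" by (rule tam_le.assoc)
    finally show ?thesis using False phi_append[of D "[d]"] by simp
  qed
qed

lemma tam_le_Prod_foldl_Prod:
  "G \<noteq> [] \<Longrightarrow> tam_le (phi G) A \<Longrightarrow> tam_le (foldl Prod C G) (Prod C A)"
  using tam_le.trans[OF tam_le_foldl_Prod_assoc tam_le.mono[OF tam_le.refl]] by blast

lemma deriv_imp_tam_le_phi: "deriv G A \<Longrightarrow> tam_le (phi G) A"
proof (induction rule: deriv.induct)
  case (ProdL A B D C)
  then show ?case by simp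
next
  case (ProdR G A D B)
  have "G \<noteq> []" "D \<noteq> []" using ProdR deriv_ctx_not_Nil by auto
  then have "tam_le (phi (G @ D)) (Prod (phi G) (phi D))"
    using tam_le_foldl_Prod_assoc phi_append by metis
  also have "tam_le \<dots> (Prod A B)" by (rule tam_le.mono[OF ProdR.IH])
  finally show ?case .
next
  case (Id A)
  then show ?case by (simp add: tam_le.refl)
next
  case (Cut T A G D B)
  have "T \<noteq> []" using Cut deriv_ctx_not_Nil by auto
  have "tam_le (phi (G @ T @ D)) (phi (G @ A # D))"
  proof (cases "G = []")
    case True
    then show ?thesis
      using phi_append[OF \<open>T \<noteq> []\<close>] tam_le_foldl_Prod_start[OF Cut.IH(1)] by simp
  next
    case False
    have "tam_le (foldl Prod (phi G) T) (Prod (phi G) A)"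
      using tam_le_Prod_foldl_Prod[OF \<open>T \<noteq> []\<close> Cut.IH(1)] .
    then show ?thesis using phi_append[OF False] tam_le_foldl_Prod_start by simp
  qed
  then show ?case using Cut.IH(2) tam_le.trans by blast
qed

lemma tam_le_imp_deriv: "tam_le A B \<Longrightarrow> deriv [A] B"
proof (induction rule: tam_le.induct)
  case (refl A)
  then show ?case by (rule deriv.Id)
next
  case (trans A B C)
  then show ?case using deriv.Cut[of "[A]" B "[]" "[]" C] by simp
next
  case (assoc A B C)
  have "deriv ([B] @ [C]) (Prod B C)" by (rule deriv.ProdR[OF deriv.Id deriv.Id])
  then have "deriv ([A] @ [B, C]) (Prod A (Prod B C))" using deriv.ProdR[OF deriv.Id] by simp
  then have "deriv [Prod A B, C] (Prod A (Prod B C))" using deriv.ProdL by simp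
  then show ?case using deriv.ProdL[of "Prod A B" C "[]"] by simp
next
  case (mono A1 A2 B1 B2)
  have "deriv ([A1] @ [B1]) (Prod A2 B2)" by (rule deriv.ProdR[OF mono.IH])
  then show ?case using deriv.ProdL[of A1 B1 "[]"] by simp
qed

lemma sub_le_iff_list_all2_deriv:
  "sub_le G D \<longleftrightarrow> (\<exists>Ps. list_all2 deriv Ps D \<and> G = concat Ps)"
proof
  assume "sub_le G D"
  then show "\<exists>Ps. list_all2 deriv Ps D \<and> G = concat Ps"
  proof (induction rule: sub_le.induct)
    case (single G A)
    then show ?case by (intro exI[of _ "[G]"]) auto
  next
    case empty
    then show ?case by auto
  next
    case (concat G1 G2 T1 T2)
    then obtain P Q where "list_all2 deriv P G2" "G1 = concat P" "list_all2 deriv Q T2" "T1 = concat Q"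
      by blast
    then show ?case by (intro exI[of _ "P @ Q"]) (auto intro: list_all2_appendI)
  qed
next
  assume "\<exists>Ps. list_all2 deriv Ps D \<and> G = concat Ps"
  then obtain Ps where "list_all2 deriv Ps D" "G = concat Ps" by blast
  then show "sub_le G D"
  proof (induction Ps D arbitrary: G rule: list_all2_induct)
    case Nil
    then show ?case by (simp add: sub_le.empty)
  next
    case (Cons p P d D)
    then show ?case using sub_le.concat[OF sub_le.single[OF Cons(1)], of "concat P" D] by simp
  qed
qed

lemma sub_le_refl: "sub_le G G"
  unfolding sub_le_iff_list_all2_deriv
  by (intro exI[of _ "map (\<lambda>a. [a]) G"]) (auto simp: list_all2_conv_all_nth intro: deriv.Id)

lemma deriv_cut_list:
  "list_all2 deriv Ps D \<Longrightarrow> deriv (H1 @ D @ H2) C \<Longrightarrow> deriv (H1 @ concat Ps @ H2) C"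
proof (induction Ps D arbitrary: H1 rule: list_all2_induct)
  case Nil
  then show ?case by simp
next
  case (Cons p P d D)
  have "deriv (H1 @ p @ (D @ H2)) C" using deriv.Cut[OF Cons(1), of H1 "D @ H2" C] Cons(4) by simp
  then show ?case using Cons(3)[of "H1 @ p"] by simp
qed

lemma sub_le_append_rightE:
  assumes "sub_le G (D1 @ D2)"
  obtains G1 G2 where "G = G1 @ G2" "sub_le G1 D1" "sub_le G2 D2"
proof -
  obtain Ps where Ps: "list_all2 deriv Ps (D1 @ D2)" "G = concat Ps"
    using assms sub_le_iff_list_all2_deriv by blast
  then obtain P1 P2 where "Ps = P1 @ P2" "list_all2 deriv P1 D1" "list_all2 deriv P2 D2"
    by (auto simp: list_all2_append2)
  then show thesis using that[of "concat P1" "concat P2"] Ps(2) sub_le_iff_list_all2_deriv by auto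
qed

lemma sub_le_trans:
  assumes "sub_le G D" "sub_le D E"
  shows "sub_le G E"
  using assms(2,1)
proof (induction D E arbitrary: G rule: sub_le.induct)
  case (single D A)
  then obtain Ps where "list_all2 deriv Ps D" "G = concat Ps"
    using sub_le_iff_list_all2_deriv by blast
  then have "deriv G A" using deriv_cut_list[of Ps D "[]" "[]" A] single(1) by simp
  then show ?case by (rule sub_le.single)
next
  case empty
  then show ?case by simp
next
  case (concat G1 G2 T1 T2)
  then obtain H1 H2 where "G = H1 @ H2" "sub_le H1 G1" "sub_le H2 T1"
    by (blast elim: sub_le_append_rightE)
  then show ?case using concat sub_le.concat by blast
qed

lemma psi_mono: "tam_le A B \<Longrightarrow> sub_le (psi A) (psi B)"
proof (induction rule: tam_le.induct)
  case (refl A)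
  then show ?case by (rule sub_le_refl)
next
  case (trans A B C)
  then show ?case using sub_le_trans by blast
next
  case (assoc A B C)
  have "sub_le ([B] @ [C]) [Prod B C]" by (rule sub_le.single[OF deriv.ProdR[OF deriv.Id deriv.Id]])
  then show ?case using sub_le.concat[OF sub_le_refl[of "psi A"]] by simp
next
  case (mono A1 A2 B1 B2)
  then show ?case using sub_le.concat[OF mono(3) sub_le.single[OF tam_le_imp_deriv[OF mono(2)]]]
    by simp
qed

lemma tam_le_foldl_Prod_sub_le: "sub_le G D \<Longrightarrow> tam_le (foldl Prod C G) (foldl Prod C D)"
proof (induction arbitrary: C rule: sub_le.induct)
  case (single G A)
  then show ?case
    using tam_le_Prod_foldl_Prod[OF deriv_ctx_not_Nil deriv_imp_tam_le_phi] by simp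
next
  case empty
  then show ?case by (simp add: tam_le.refl)
next
  case (concat G1 G2 T1 T2)
  then show ?case using tam_le.trans[OF concat.IH(2) tam_le_foldl_Prod_start[OF concat.IH(1)]]
    by simp
qed

lemma phi_mono: "sub_le G D \<Longrightarrow> G \<noteq> [] \<Longrightarrow> tam_le (phi G) (phi D)"
proof -
  assume "sub_le G D" "G \<noteq> []"
  then obtain Ps where Ps: "list_all2 deriv Ps D" "G = concat Ps"
    using sub_le_iff_list_all2_deriv by blast
  then obtain p Ps' d D' where e: "Ps = p # Ps'" "D = d # D'" "deriv p d" "list_all2 deriv Ps' D'"
    using \<open>G \<noteq> []\<close> by (cases Ps; cases D) auto
  have "phi G = foldl Prod (phi p) (concat Ps')"
    using Ps e phi_append[OF deriv_ctx_not_Nil[OF \<open>deriv p d\<close>]] by simp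
  also have "tam_le \<dots> (foldl Prod d (concat Ps'))"
    using tam_le_foldl_Prod_start deriv_imp_tam_le_phi e by blast
  also have "tam_le \<dots> (foldl Prod d D')"
    using tam_le_foldl_Prod_sub_le sub_le_iff_list_all2_deriv e by blast
  finally show ?thesis using e by simp
qed

(* Each associativity step (AB)C \<le> A(BC) lowers this weight by the length of fr A. *)
fun assoc_weight :: "'a frm \<Rightarrow> nat" where
  "assoc_weight (Atom p) = 0"
| "assoc_weight (Prod A B) = assoc_weight A + assoc_weight B + length (fr A)"

lemma tam_le_fr: "tam_le A B \<Longrightarrow> fr A = fr B"
  by (induction rule: tam_le.induct) auto

lemma tam_le_assoc_weight: "tam_le A B \<Longrightarrow> A = B \<or> assoc_weight B < assoc_weight A"
proof (induction rule: tam_le.induct)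
  case (assoc A B C)
  then show ?case using fr_not_Nil[of A] by simp
next
  case (mono A1 A2 B1 B2)
  then show ?case using tam_le_fr[OF mono(1)] by auto
qed auto

lemma tam_le_antisym: "tam_le A B \<Longrightarrow> tam_le B A \<Longrightarrow> A = B"
  using tam_le_assoc_weight[of A B] tam_le_assoc_weight[of B A] by auto

theorem lemma2p9:
  fixes \<Omega> :: "'a list" and A B :: "'a frm"
  assumes "\<Omega> \<noteq> []" and "fr A = \<Omega>" and "fr B = \<Omega>"
  shows "(\<forall>X J. is_join tam_le (Frm \<Omega>) A B X \<longrightarrow> is_join sub_le (Ctx \<Omega>) (psi A) (psi B) J
             \<longrightarrow> X = phi J)
       \<and> (\<forall>X Z. is_least tam_le (Frm \<Omega>) X \<longrightarrow> is_least sub_le (Ctx \<Omega>) Z \<longrightarrow> X = phi Z)"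
proof -
  have ctx_not_Nil: "G \<noteq> []" if "G \<in> Ctx \<Omega>" for G
    using that \<open>\<Omega> \<noteq> []\<close> frc_eq_Nil_iff by (auto simp: Ctx_def)
  have psi_into: "psi X \<in> Ctx \<Omega>" if "X \<in> Frm \<Omega>" for X
    using that by (simp add: Frm_def Ctx_def frc_psi)
  have phi_into: "phi G \<in> Frm \<Omega>" if "G \<in> Ctx \<Omega>" for G
    using that ctx_not_Nil by (simp add: Frm_def Ctx_def fr_phi)
  have phi_mono_on: "tam_le (phi G) (phi D)" if "G \<in> Ctx \<Omega>" "sub_le G D" for G D
    using that ctx_not_Nil phi_mono by blast
  have "A \<in> Frm \<Omega>" "B \<in> Frm \<Omega>" using assms by (simp_all add: Frm_def)
  then show ?thesis
    using is_join_retraction[where le = tam_le and le' = sub_le and f = psi and g = phi,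
        OF tam_le_antisym psi_into phi_into psi_mono phi_mono_on phi_psi]
      is_least_retraction[where le = tam_le and le' = sub_le and f = psi and g = phi,
        OF tam_le_antisym psi_into phi_into phi_mono_on phi_psi]
    by blast
qed

end
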